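(* Let $\mathcal{X}\in\mathbb{IR}^n$ be a box, $w\in\mathbb{R}^n_{>0}$, and let $f=[f_k]:\mathbb{R}^n\to\mathbb{R}^n$ and $g_p=[g_{p,k}]:\mathbb{R}^n\to\mathbb{R}^n$ ($p\in\{1,\dots,d\}$) be functions such that for every $k\in\{1,\dots,n\}$ and $p\in\{1,\dots,d\}$, $f_k$ and $g_{p,k}$ are Lipschitz on $\mathcal{X}$ with respect to $\|\cdot\|_w$, with Lipschitz constants $L^w_{f_k}\le \overline{f}_k$ and $L^w_{g_{p,k}}\le \overline{g}_{p,k}$ for given numbers $\overline{f}_k,\overline{g}_{p,k}\in\mathbb{R}_+$. Let $\mathscr{E}_j=\{(x^i,C_{\mathcal{F}^i},C_{\mathcal{G}^i})\}_{i=0}^{j-1}$ be a finite set with $x^i\in\mathcal{X}$, $C_{\mathcal{F}^i}=[C_{\mathcal{F}^i_k}]\in\mathbb{IR}^n$ and $C_{\mathcal{G}^i}=[C_{\mathcal{G}^i_{p,k}}]\in\mathbb{IR}^{d\times n}$ satisfying $f_k(x^i)\in C_{\mathcal{F}^i_k}$ and $g_{p,k}(x^i)\in C_{\mathcal{G}^i_{p,k}}$ for all $i$, $p\in\{1,\dots,d\}$, $k\in\{1,\dots,n\}$. Let $\boldsymbol{\eta}^w:\mathbb{IR}^n\to\mathbb{IR}$ be any interval extension of the weighted norm $\|\cdot\|_w$, i.e. $\boldsymbol{\eta}^w(\mathcal{B})\supseteq\{\|y\|_w: y\in\mathcal{B}\}$ for every $\mathcal{B}\in\mathbb{IR}^n$.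 Define interval-valued functions $\boldsymbol{f}=[\boldsymbol{f}_k]$ and $\boldsymbol{g}_p=[\boldsymbol{g}_{p,k}]$ on $\mathbb{IR}^n$ by $$\boldsymbol{f}_k(\mathcal{A})=\bigcap_{i=0}^{j-1}\Big(C_{\mathcal{F}^i_k}+[-1,1]\,\overline{f}_k\,\boldsymbol{\eta}^w(\mathcal{A}-x^i)\Big),\qquad \boldsymbol{g}_{p,k}(\mathcal{A})=\bigcap_{i=0}^{j-1}\Big(C_{\mathcal{G}^i_{p,k}}+[-1,1]\,\overline{g}_{p,k}\,\boldsymbol{\eta}^w(\mathcal{A}-x^i)\Big).$$ Then for every interval $\mathcal{A}\in\mathbb{IR}^n$ with $\mathcal{A}\subseteq\mathcal{X}$, $\{f_k(x):x\in\mathcal{A}\}\subseteq\boldsymbol{f}_k(\mathcal{A})$ and $\{g_{p,k}(x):x\in\mathcal{A}\}\subseteq\boldsymbol{g}_{p,k}(\mathcal{A})$ for all $k\in\{1,\dots,n\}$, $p\in\{1,\dots,d\}$.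
   Context: $\mathbb{IR}$ denotes the set of closed bounded real intervals $[a,b]$, $a\le b$; $\mathbb{IR}^n$ and $\mathbb{IR}^{d\times n}$ denote interval vectors and interval matrices (componentwise). Arithmetic on intervals is standard interval arithmetic: $\mathcal{A}+\mathcal{B}=\{a+b\}$, $\mathcal{A}\mathcal{B}=\{ab\}$, etc., with $a\in\mathcal{A},b\in\mathcal{B}$, and a real number is identified with a degenerate interval; for an interval vector $\mathcal{A}$ and point $x$, $\mathcal{A}-x$ is the componentwise interval difference. Intersections and inclusions of interval vectors/matrices are componentwise. The weighted norm is $\|x\|_w=\sqrt{\sum_{i=1}^n(w_ix_i)^2}$, and the Lipschitz constant of $h:\mathcal{X}\to\mathbb{R}$ with respect to it is $L^w_h=\sup\{L: |h(x)-h(y)|\le L\|x-y\|_w,\ x,y\in\mathcal{X}, x\ne y\}$. *)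

theory Defs
  imports "HOL-Analysis.Analysis"
begin

definition is_ival :: "real set \<Rightarrow> bool" where
  "is_ival S \<longleftrightarrow> (\<exists>a b. a \<le> b \<and> S = {a..b})"

definition is_ivec :: "('n \<Rightarrow> real set) \<Rightarrow> bool" where
  "is_ivec B \<longleftrightarrow> (\<forall>k. is_ival (B k))"

definition box_pts :: "('n \<Rightarrow> real set) \<Rightarrow> (real ^ 'n) set" where
  "box_pts B = {x. \<forall>k. x $ k \<in> B k}"

definition wnorm :: "real ^ 'n \<Rightarrow> real ^ 'n \<Rightarrow> real" where
  "wnorm w x = sqrt (\<Sum>i\<in>UNIV. (w $ i * x $ i)^2)"

definition ivec_minus :: "('n \<Rightarrow> real set) \<Rightarrow> real ^ 'n \<Rightarrow> ('n \<Rightarrow> real set)" where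
  "ivec_minus A x = (\<lambda>k. (\<lambda>a. a - x $ k) ` A k)"

text \<open>Interval arithmetic C + [-1,1] * c * E (interval arithmetic = set arithmetic on intervals).\<close>
definition ival_enclose :: "real set \<Rightarrow> real \<Rightarrow> real set \<Rightarrow> real set" where
  "ival_enclose C c E = {y + s * c * e | y s e. y \<in> C \<and> s \<in> {-1..1} \<and> e \<in> E}"

definition is_wnorm_ext :: "real ^ 'n \<Rightarrow> (('n \<Rightarrow> real set) \<Rightarrow> real set) \<Rightarrow> bool" where
  "is_wnorm_ext w eta \<longleftrightarrow>
     (\<forall>B. is_ivec B \<longrightarrow> is_ival (eta B) \<and> {wnorm w y | y. y \<in> box_pts B} \<subseteq> eta B)"

definition wlip_on :: "real ^ 'n \<Rightarrow> (real ^ 'n) set \<Rightarrow> real \<Rightarrow> (real ^ 'n \<Rightarrow> real) \<Rightarrow> bool" where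
  "wlip_on w X L h \<longleftrightarrow> (\<forall>x\<in>X. \<forall>y\<in>X. \<bar>h x - h y\<bar> \<le> L * wnorm w (x - y))"

definition lip_encl ::
  "nat \<Rightarrow> (nat \<Rightarrow> real ^ 'n) \<Rightarrow> (nat \<Rightarrow> real set) \<Rightarrow> real \<Rightarrow>
   (('n \<Rightarrow> real set) \<Rightarrow> real set) \<Rightarrow> ('n \<Rightarrow> real set) \<Rightarrow> real set" where
  "lip_encl j xs C c eta A = (\<Inter>i\<in>{..<j}. ival_enclose (C i) c (eta (ivec_minus A (xs i))))"

end

theory Submission
  imports Defs
begin

text \<open>If x lies in the box A and the data point x_i lies in X, the Lipschitz bound gives
  |h x - h x_i| \<le> c ||x - x_i||_w, and ||x - x_i||_w lies in \<eta>(A - x_i) because x - x_i is a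
  point of the interval vector A - x_i. So h x lies in every set C_i + [-1,1] c \<eta>(A - x_i),
  hence in their intersection.\<close>

lemma is_ivec_ivec_minus:
  assumes "is_ivec A"
  shows "is_ivec (ivec_minus A x)"
proof -
  have "is_ival ((\<lambda>a. a - x $ k) ` A k)" for k
  proof -
    obtain a b where "a \<le> b" "A k = {a..b}"
      using assms unfolding is_ivec_def is_ival_def by blast
    then show ?thesis
      unfolding is_ival_def by (auto simp: image_diff_atLeastAtMost)
  qed
  then show ?thesis
    unfolding is_ivec_def ivec_minus_def by blast
qed

lemma minus_mem_box_pts_ivec_minus:
  assumes "x \<in> box_pts A"
  shows "x - y \<in> box_pts (ivec_minus A y)"
  using assms unfolding box_pts_def ivec_minus_def by auto

lemma wnorm_diff_mem_wnorm_ext: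
  assumes "is_wnorm_ext w eta" and "is_ivec A" and "x \<in> box_pts A"
  shows "wnorm w (x - y) \<in> eta (ivec_minus A y)"
  using assms is_ivec_ivec_minus minus_mem_box_pts_ivec_minus
  unfolding is_wnorm_ext_def by blast

lemma mem_ival_enclose_of_abs_diff_le:
  assumes "y \<in> C" and "e \<in> E" and bound: "\<bar>v - y\<bar> \<le> c * e"
  shows "v \<in> ival_enclose C c E"
proof (cases "c * e = 0")
  case True
  with bound have "v = y + 0 * c * e" by simp
  with assms(1,2) show ?thesis
    unfolding ival_enclose_def by fastforce
next
  case False
  with bound have "c * e > 0" by linarith
  define s where "s = (v - y) / (c * e)"
  have "s \<in> {-1..1}"
    using bound \<open>c * e > 0\<close> by (auto simp: s_def abs_le_iff field_simps)
  moreover have "v = y + s * c * e"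
    using False by (simp add: s_def)
  ultimately show ?thesis
    using assms(1,2) unfolding ival_enclose_def by blast
qed

lemma wlip_on_image_subset_lip_encl:
  assumes lip: "wlip_on w (box_pts X) c h"
    and xs_in: "\<forall>i<j. xs i \<in> box_pts X"
    and C_encl: "\<forall>i<j. h (xs i) \<in> C i"
    and eta: "is_wnorm_ext w eta"
    and A: "is_ivec A" and A_sub: "\<forall>k. A k \<subseteq> X k"
  shows "h ` box_pts A \<subseteq> lip_encl j xs C c eta A"
proof (rule image_subsetI)
  fix x assume x: "x \<in> box_pts A"
  then have "x \<in> box_pts X"
    using A_sub unfolding box_pts_def by blast
  have "h x \<in> ival_enclose (C i) c (eta (ivec_minus A (xs i)))" if "i < j" for i
  proof (rule mem_ival_enclose_of_abs_diff_le)
    show "h (xs i) \<in> C i" using C_encl that by blast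
    show "wnorm w (x - xs i) \<in> eta (ivec_minus A (xs i))"
      using wnorm_diff_mem_wnorm_ext[OF eta A x] .
    show "\<bar>h x - h (xs i)\<bar> \<le> c * wnorm w (x - xs i)"
      using lip \<open>x \<in> box_pts X\<close> xs_in that unfolding wlip_on_def by blast
  qed
  then show "h x \<in> lip_encl j xs C c eta A"
    unfolding lip_encl_def by blast
qed

theorem lemma1:
  fixes X :: "'n::finite \<Rightarrow> real set"
    and w :: "real ^ 'n"
    and f :: "real ^ 'n \<Rightarrow> real ^ 'n"
    and g :: "'d::finite \<Rightarrow> real ^ 'n \<Rightarrow> real ^ 'n"
    and fbar :: "'n \<Rightarrow> real"
    and gbar :: "'d \<Rightarrow> 'n \<Rightarrow> real"
    and j :: nat
    and xs :: "nat \<Rightarrow> real ^ 'n"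
    and CF :: "nat \<Rightarrow> 'n \<Rightarrow> real set"
    and CG :: "nat \<Rightarrow> 'd \<Rightarrow> 'n \<Rightarrow> real set"
    and eta :: "('n \<Rightarrow> real set) \<Rightarrow> real set"
    and A :: "'n \<Rightarrow> real set"
  assumes X_box: "is_ivec X"
    and w_pos: "\<forall>k. w $ k > 0"
    and fbar_nn: "\<forall>k. fbar k \<ge> 0"
    and gbar_nn: "\<forall>p k. gbar p k \<ge> 0"
    and f_lip: "\<forall>k. wlip_on w (box_pts X) (fbar k) (\<lambda>x. f x $ k)"
    and g_lip: "\<forall>p k. wlip_on w (box_pts X) (gbar p k) (\<lambda>x. g p x $ k)"
    and xs_in: "\<forall>i<j. xs i \<in> box_pts X"
    and CF_ival: "\<forall>i<j. is_ivec (CF i)"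
    and CG_ival: "\<forall>i<j. \<forall>p. is_ivec (CG i p)"
    and CF_encl: "\<forall>i<j. \<forall>k. f (xs i) $ k \<in> CF i k"
    and CG_encl: "\<forall>i<j. \<forall>p k. g p (xs i) $ k \<in> CG i p k"
    and eta_ext: "is_wnorm_ext w eta"
    and A_ival: "is_ivec A"
    and A_sub: "\<forall>k. A k \<subseteq> X k"
  shows "(\<forall>k. (\<lambda>x. f x $ k) ` box_pts A \<subseteq> lip_encl j xs (\<lambda>i. CF i k) (fbar k) eta A)
       \<and> (\<forall>p k. (\<lambda>x. g p x $ k) ` box_pts A \<subseteq> lip_encl j xs (\<lambda>i. CG i p k) (gbar p k) eta A)"
  using wlip_on_image_subset_lip_encl[OF _ xs_in _ eta_ext A_ival A_sub] f_lip g_lip CF_encl CG_encl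
  by simp

end
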